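(* Let $g_{ij}(\eta)$ be $\mathcal G_{i,j-1}$-measurable random variables ($i,j\ge1$). Then, whenever all the integrals exist, $$E_\eta[g_{ij}(\eta)Z_{ij}(\theta)I_{ij}^{cen}\mid\mathcal G_{i,j-1}]=-E_\eta[g_{ij}(\eta)Z_{ij}(\theta)I_{ij}^{obs}\mid\mathcal G_{i,j-1}],$$ $$E_\eta[g_{ij}(\eta)(Z_{ij}^2(\theta)-\sigma^2)I_{ij}^{cen}\mid\mathcal G_{i,j-1}]=-E_\eta[g_{ij}(\eta)(Z_{ij}^2(\theta)-\sigma^2)I_{ij}^{obs}\mid\mathcal G_{i,j-1}].$$
   Context: Probability measures $P_\eta$, $\eta=(\theta^T,\sigma^2)^T\in K\subset\mathbb R^{p+1}$, on a measurable space; $E_\eta$ is expectation under $P_\eta$. For each subject $i\ge1$: event times $0=S_{i0}<S_{i1}<\cdots$, censoring time $0<C_i<\infty$, random covariates $x_{ij}$. $\mathcal F_{ij}=\sigma\{S_{il}\ (0\le l\le j);x_{il}\ (1\le l\le j+1)\}$, $\mathcal G_{ij}=\sigma\{\mathcal F_{ij},\{S_{ik}\le C_i\},\{S_{ik}=C_i\}\ (1\le k\le j)\}$ for $j\ge1$, $\mathcal G_{i0}=\mathcal F_{i0}$. Gap times $Y_{ij}=S_{ij}-S_{i,j-1}$ have finite second moments and satisfy $E_\theta[Y_{ij}\mid\mathcal F_{i,j-1}]=\mu_{ij}(\theta)$, $\mathrm{var}_\eta[Y_{ij}\mid\mathcal F_{i,j-1}]=\sigma^2V_{ij}^2(\theta)$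 with known $\mu_{ij}(\theta)$, $V_{ij}(\theta)>0$ that are $\mathcal F_{i,j-1}$-measurable. Standing assumption (A): $E_\theta[Y_{ij}\mid\mathcal G_{i,j-1}]=E_\theta[Y_{ij}\mid\mathcal F_{i,j-1}]$ and $\mathrm{var}_\eta[Y_{ij}\mid\mathcal G_{i,j-1}]=\mathrm{var}_\eta[Y_{ij}\mid\mathcal F_{i,j-1}]$. $Z_{ij}(\theta)=(Y_{ij}-\mu_{ij}(\theta))/V_{ij}(\theta)$. Indicators: $I_{ij}^{obs}=I\{S_{ij}\le C_i\}$, $I_{ij}^{cen}=I\{S_{i,j-1}<C_i<S_{ij}\}$. *)

theory Defs
  imports "HOL-Probability.Probability"
begin

text \<open>Generators of F_{ij} = sigma{S_{il} (0<=l<=j); x_{il} (1<=l<=j+1)}.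
  S i l : event times, x i l : covariates (values in the measurable space Xsp).\<close>
definition F_gen :: "'a measure \<Rightarrow> (nat \<Rightarrow> nat \<Rightarrow> 'a \<Rightarrow> real) \<Rightarrow> (nat \<Rightarrow> nat \<Rightarrow> 'a \<Rightarrow> 'c)
    \<Rightarrow> 'c measure \<Rightarrow> nat \<Rightarrow> nat \<Rightarrow> 'a set set" where
  "F_gen \<Omega> S x Xsp i j =
     {S i l -` B \<inter> space \<Omega> | l B. l \<le> j \<and> B \<in> sets borel}
   \<union> {x i l -` B \<inter> space \<Omega> | l B. 1 \<le> l \<and> l \<le> Suc j \<and> B \<in> sets Xsp}"

definition F_alg :: "'a measure \<Rightarrow> (nat \<Rightarrow> nat \<Rightarrow> 'a \<Rightarrow> real) \<Rightarrow> (nat \<Rightarrow> nat \<Rightarrow> 'a \<Rightarrow> 'c)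
    \<Rightarrow> 'c measure \<Rightarrow> nat \<Rightarrow> nat \<Rightarrow> 'a measure" where
  "F_alg \<Omega> S x Xsp i j = sigma (space \<Omega>) (F_gen \<Omega> S x Xsp i j)"

text \<open>G_{ij} = sigma{F_{ij}, {S_{ik} <= C_i}, {S_{ik} = C_i} (1<=k<=j)}; for j = 0 the
  extra generators are absent, so G_{i0} = F_{i0}.\<close>
definition G_alg :: "'a measure \<Rightarrow> (nat \<Rightarrow> nat \<Rightarrow> 'a \<Rightarrow> real) \<Rightarrow> (nat \<Rightarrow> nat \<Rightarrow> 'a \<Rightarrow> 'c)
    \<Rightarrow> 'c measure \<Rightarrow> (nat \<Rightarrow> 'a \<Rightarrow> real) \<Rightarrow> nat \<Rightarrow> nat \<Rightarrow> 'a measure" where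
  "G_alg \<Omega> S x Xsp C i j = sigma (space \<Omega>)
     (F_gen \<Omega> S x Xsp i j
      \<union> {{\<omega> \<in> space \<Omega>. S i k \<omega> \<le> C i \<omega>} | k. 1 \<le> k \<and> k \<le> j}
      \<union> {{\<omega> \<in> space \<Omega>. S i k \<omega> = C i \<omega>} | k. 1 \<le> k \<and> k \<le> j})"

definition gap :: "(nat \<Rightarrow> nat \<Rightarrow> 'a \<Rightarrow> real) \<Rightarrow> nat \<Rightarrow> nat \<Rightarrow> 'a \<Rightarrow> real" where
  "gap S i j \<omega> = S i j \<omega> - S i (j - 1) \<omega>"

definition Zres :: "(nat \<Rightarrow> nat \<Rightarrow> 'a \<Rightarrow> real) \<Rightarrow> (nat \<Rightarrow> nat \<Rightarrow> 't \<Rightarrow> 'a \<Rightarrow> real)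
    \<Rightarrow> (nat \<Rightarrow> nat \<Rightarrow> 't \<Rightarrow> 'a \<Rightarrow> real) \<Rightarrow> nat \<Rightarrow> nat \<Rightarrow> 't \<Rightarrow> 'a \<Rightarrow> real" where
  "Zres S \<mu> V i j \<theta> \<omega> = (gap S i j \<omega> - \<mu> i j \<theta> \<omega>) / V i j \<theta> \<omega>"

definition Iobs :: "(nat \<Rightarrow> nat \<Rightarrow> 'a \<Rightarrow> real) \<Rightarrow> (nat \<Rightarrow> 'a \<Rightarrow> real) \<Rightarrow> nat \<Rightarrow> nat \<Rightarrow> 'a \<Rightarrow> real" where
  "Iobs S C i j \<omega> = (if S i j \<omega> \<le> C i \<omega> then 1 else 0)"

definition Icen :: "(nat \<Rightarrow> nat \<Rightarrow> 'a \<Rightarrow> real) \<Rightarrow> (nat \<Rightarrow> 'a \<Rightarrow> real) \<Rightarrow> nat \<Rightarrow> nat \<Rightarrow> 'a \<Rightarrow> real" where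
  "Icen S C i j \<omega> = (if S i (j - 1) \<omega> < C i \<omega> \<and> C i \<omega> < S i j \<omega> then 1 else 0)"

end

(*
  On {S_{i,j-1} < C_i} exactly one of the j-th gap time being censored or observed occurs, and
  outside it neither does, so I_cen + I_obs is the at-risk indicator I{S_{i,j-1} < C_i}. This
  indicator is G_{i,j-1}-measurable and factors out of the conditional expectation of the sum,
  leaving E[Y_ij - mu_ij | G] and E[(Y_ij - mu_ij)^2 - sigma^2 V_ij^2 | G]. Both vanish because,
  by assumption (A), the conditional mean and variance of Y_ij given G_{i,j-1} are those given
  F_{i,j-1}.
*)

theory Submission
  imports Defs
begin

context sigma_finite_subalgebra
begin

lemma integrable_of_AE_eq_real_cond_exp:
  assumes "integrable M f" "AE x in M. real_cond_exp M F f x = m x" "m \<in> borel_measurable M"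
  shows "integrable M m"
  by (rule integrable_cong_AE_imp[OF real_cond_exp_int(1)[OF assms(1)] assms(3,2)])

lemma real_cond_exp_centred:
  assumes "integrable M f" "m \<in> borel_measurable F" "AE x in M. real_cond_exp M F f x = m x"
  shows "AE x in M. real_cond_exp M F (\<lambda>x. f x - m x) x = 0"
proof -
  have m_M: "m \<in> borel_measurable M" using measurable_from_subalg[OF subalg assms(2)] .
  have m_int: "integrable M m"
    using integrable_of_AE_eq_real_cond_exp[OF assms(1,3) m_M] .
  show ?thesis
    using real_cond_exp_diff[OF assms(1) m_int] real_cond_exp_F_meas[OF m_int assms(2)] assms(3)
    by eventually_elim simp
qed

lemma square_integrable_diff_cond_exp:
  assumes Y: "integrable M Y" "integrable M (\<lambda>x. (Y x)\<^sup>2)"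
    and m: "m \<in> borel_measurable M" "AE x in M. real_cond_exp M F Y x = m x"
  shows "integrable M (\<lambda>x. (Y x - m x)\<^sup>2)"
proof -
  have "integrable M (\<lambda>x. (real_cond_exp M F Y x)\<^sup>2)"
    using integrable_convex_cond_exp[where q = "\<lambda>y. y\<^sup>2" and I = UNIV, OF Y(1) _ _ Y(2)]
      convex_power_even[of 2] by simp
  moreover have "AE x in M. (real_cond_exp M F Y x)\<^sup>2 = (m x)\<^sup>2"
    using m(2) by (rule eventually_mono) simp
  ultimately have m_sq: "integrable M (\<lambda>x. (m x)\<^sup>2)"
    by (rule integrable_cong_AE_imp[OF _ borel_measurable_power[OF m(1)]])
  have sq_bound: "(a - b)\<^sup>2 \<le> 2 * a\<^sup>2 + 2 * b\<^sup>2" for a b :: real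
    using zero_le_power2[of "a + b"] by (simp add: power2_eq_square algebra_simps)
  show ?thesis
  proof (rule Bochner_Integration.integrable_bound)
    show "integrable M (\<lambda>x. 2 * (Y x)\<^sup>2 + 2 * (m x)\<^sup>2)" using Y(2) m_sq by simp
    show "(\<lambda>x. (Y x - m x)\<^sup>2) \<in> borel_measurable M"
      using borel_measurable_integrable[OF Y(1)] m(1) by measurable
    show "AE x in M. norm ((Y x - m x)\<^sup>2) \<le> norm (2 * (Y x)\<^sup>2 + 2 * (m x)\<^sup>2)"
      by (rule AE_I2) (simp add: sq_bound)
  qed
qed

lemma real_cond_exp_eq_neg_if_sum_factors:
  assumes f: "integrable M f" "integrable M f'"
    and c: "c \<in> borel_measurable F" and D: "D \<in> borel_measurable M"
    and sum: "\<And>x. x \<in> space M \<Longrightarrow> f x + f' x = c x * D x"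
    and D0: "AE x in M. real_cond_exp M F D x = 0"
  shows "AE x in M. real_cond_exp M F f x = - real_cond_exp M F f' x"
proof -
  have ff'_int: "integrable M (\<lambda>x. f x + f' x)" using f by simp
  have "integrable M (\<lambda>x. f x + f' x) \<longleftrightarrow> integrable M (\<lambda>x. c x * D x)"
    by (rule Bochner_Integration.integrable_cong) (simp_all add: sum)
  with ff'_int have cD_int: "integrable M (\<lambda>x. c x * D x)" by simp
  have "AE x in M. f x + f' x = c x * D x" using sum by (rule AE_I2)
  then have "AE x in M. real_cond_exp M F (\<lambda>x. f x + f' x) x = real_cond_exp M F (\<lambda>x. c x * D x) x"
    by (rule real_cond_exp_cong) (use ff'_int cD_int in \<open>simp_all add: borel_measurable_integrable\<close>)
  then show ?thesis
    using real_cond_exp_add[OF f] real_cond_exp_mult[OF c D cD_int] D0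
  proof eventually_elim
    case (elim x)
    then have "real_cond_exp M F f x + real_cond_exp M F f' x = 0" by (metis mult_zero_right)
    then show ?case by linarith
  qed
qed

end

lemma subalgebra_trans: "subalgebra M G \<Longrightarrow> subalgebra G F \<Longrightarrow> subalgebra M F"
  unfolding subalgebra_def by auto

lemma finite_measure_subalgebraI:
  "finite_measure M \<Longrightarrow> subalgebra M F \<Longrightarrow> finite_measure_subalgebra M F"
  by (simp add: finite_measure_subalgebra_def finite_measure_subalgebra_axioms_def)

lemma real_cond_exp_square_deviation_eq:
  assumes F: "sigma_finite_subalgebra M F" and G: "sigma_finite_subalgebra M G"
    and mean_F: "AE x in M. real_cond_exp M F Y x = m x"
    and mean_G: "AE x in M. real_cond_exp M G Y x = m x"
    and var: "AE x in M. real_cond_exp M G (\<lambda>x. (Y x - real_cond_exp M G Y x)\<^sup>2) x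
                       = real_cond_exp M F (\<lambda>x. (Y x - real_cond_exp M F Y x)\<^sup>2) x"
    and [measurable]: "Y \<in> borel_measurable M" "m \<in> borel_measurable M"
  shows "AE x in M. real_cond_exp M G (\<lambda>x. (Y x - m x)\<^sup>2) x
                  = real_cond_exp M F (\<lambda>x. (Y x - m x)\<^sup>2) x"
proof -
  have "AE x in M. (Y x - m x)\<^sup>2 = (Y x - real_cond_exp M G Y x)\<^sup>2"
    using mean_G by (rule eventually_mono) simp
  then have dev_G: "AE x in M. real_cond_exp M G (\<lambda>x. (Y x - m x)\<^sup>2) x
                       = real_cond_exp M G (\<lambda>x. (Y x - real_cond_exp M G Y x)\<^sup>2) x"
    by (rule sigma_finite_subalgebra.real_cond_exp_cong[OF G]) measurable
  have "AE x in M. (Y x - m x)\<^sup>2 = (Y x - real_cond_exp M F Y x)\<^sup>2"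
    using mean_F by (rule eventually_mono) simp
  then have dev_F: "AE x in M. real_cond_exp M F (\<lambda>x. (Y x - m x)\<^sup>2) x
                       = real_cond_exp M F (\<lambda>x. (Y x - real_cond_exp M F Y x)\<^sup>2) x"
    by (rule sigma_finite_subalgebra.real_cond_exp_cong[OF F]) measurable
  show ?thesis using dev_G dev_F var by eventually_elim simp
qed

lemma centred_moments_real_cond_exp:
  assumes "finite_measure M" and MG: "subalgebra M G" and GF: "subalgebra G F"
    and Y: "Y \<in> borel_measurable M" "integrable M (\<lambda>x. (Y x)\<^sup>2)"
    and m: "m \<in> borel_measurable F" and v: "v \<in> borel_measurable F"
    and mean_F: "AE x in M. real_cond_exp M F Y x = m x"
    and mean_G: "AE x in M. real_cond_exp M G Y x = real_cond_exp M F Y x"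
    and var_F: "AE x in M. real_cond_exp M F (\<lambda>x. (Y x - m x)\<^sup>2) x = v x"
    and var_G: "AE x in M. real_cond_exp M G (\<lambda>x. (Y x - real_cond_exp M G Y x)\<^sup>2) x
                         = real_cond_exp M F (\<lambda>x. (Y x - real_cond_exp M F Y x)\<^sup>2) x"
  shows "AE x in M. real_cond_exp M G (\<lambda>x. Y x - m x) x = 0"
    and "AE x in M. real_cond_exp M G (\<lambda>x. (Y x - m x)\<^sup>2 - v x) x = 0"
proof -
  interpret G: finite_measure_subalgebra M G by (rule finite_measure_subalgebraI) fact+
  interpret F: finite_measure_subalgebra M F
    by (rule finite_measure_subalgebraI) (fact, rule subalgebra_trans[OF MG GF])
  have m_G: "m \<in> borel_measurable G" and v_G: "v \<in> borel_measurable G"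
    using measurable_from_subalg[OF GF] m v by auto
  have m_M: "m \<in> borel_measurable M" using measurable_from_subalg[OF MG m_G] .
  have Y_int: "integrable M Y" by (rule G.square_integrable_imp_integrable[OF Y])
  have mean_G': "AE x in M. real_cond_exp M G Y x = m x"
    using mean_G mean_F by eventually_elim simp
  show "AE x in M. real_cond_exp M G (\<lambda>x. Y x - m x) x = 0"
    by (rule G.real_cond_exp_centred[OF Y_int m_G mean_G'])
  have dev_int: "integrable M (\<lambda>x. (Y x - m x)\<^sup>2)"
    by (rule F.square_integrable_diff_cond_exp[OF Y_int Y(2) m_M mean_F])
  have "AE x in M. real_cond_exp M G (\<lambda>x. (Y x - m x)\<^sup>2) x = v x"
    using real_cond_exp_square_deviation_eq[OF F.sigma_finite_subalgebra_axioms
        G.sigma_finite_subalgebra_axioms mean_F mean_G' var_G Y(1) m_M] var_F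
    by eventually_elim simp
  then show "AE x in M. real_cond_exp M G (\<lambda>x. (Y x - m x)\<^sup>2 - v x) x = 0"
    by (rule G.real_cond_exp_centred[OF dev_int v_G])
qed

lemma space_G_alg [simp]: "space (G_alg \<Omega> S x Xsp C i j) = space \<Omega>"
  unfolding G_alg_def by (simp add: space_measure_of_conv)

lemma F_gen_subset_Pow: "F_gen \<Omega> S x Xsp i j \<subseteq> Pow (space \<Omega>)"
  unfolding F_gen_def by auto

lemma sets_G_alg: "sets (G_alg \<Omega> S x Xsp C i j) = sigma_sets (space \<Omega>)
     (F_gen \<Omega> S x Xsp i j
      \<union> {{\<omega> \<in> space \<Omega>. S i k \<omega> \<le> C i \<omega>} | k. 1 \<le> k \<and> k \<le> j}
      \<union> {{\<omega> \<in> space \<Omega>. S i k \<omega> = C i \<omega>} | k. 1 \<le> k \<and> k \<le> j})"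
  unfolding G_alg_def using F_gen_subset_Pow[of \<Omega> S x Xsp i j] by (intro sets_measure_of) auto

lemma subalgebra_G_alg_F_alg: "subalgebra (G_alg \<Omega> S x Xsp C i j) (F_alg \<Omega> S x Xsp i j)"
  unfolding subalgebra_def sets_G_alg F_alg_def sets_measure_of[OF F_gen_subset_Pow]
  by (auto simp: space_measure_of_conv intro!: sigma_sets_mono')

lemma subalgebra_G_alg:
  assumes "sets M = sets \<Omega>" and "\<And>l. S i l \<in> borel_measurable \<Omega>"
    and "\<And>l. x i l \<in> measurable \<Omega> Xsp" and "C i \<in> borel_measurable \<Omega>"
  shows "subalgebra M (G_alg \<Omega> S x Xsp C i j)"
proof -
  have "F_gen \<Omega> S x Xsp i j \<subseteq> sets \<Omega>"
    unfolding F_gen_def using assms(2,3) by (auto simp: measurable_sets)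
  then have "sets (G_alg \<Omega> S x Xsp C i j) \<subseteq> sets \<Omega>"
    unfolding sets_G_alg using assms(2,4) by (intro sets.sigma_sets_subset) auto
  then show ?thesis
    unfolding subalgebra_def using assms(1) sets_eq_imp_space_eq[OF assms(1)] by simp
qed

text \<open>For j = 0 the algebra has no censoring generators, so the at-risk set must be everything.\<close>

lemma at_risk_set_in_G_alg:
  assumes "\<And>\<omega>. \<omega> \<in> space \<Omega> \<Longrightarrow> S i 0 \<omega> < C i \<omega>"
  shows "{\<omega> \<in> space \<Omega>. S i j \<omega> < C i \<omega>} \<in> sets (G_alg \<Omega> S x Xsp C i j)"
proof (cases "j = 0")
  case True
  then have "{\<omega> \<in> space \<Omega>. S i j \<omega> < C i \<omega>} = space (G_alg \<Omega> S x Xsp C i j)"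
    using assms by auto
  then show ?thesis by (metis sets.top)
next
  case False
  have "{\<omega> \<in> space \<Omega>. S i j \<omega> \<le> C i \<omega>} \<in> sets (G_alg \<Omega> S x Xsp C i j)"
    and "{\<omega> \<in> space \<Omega>. S i j \<omega> = C i \<omega>} \<in> sets (G_alg \<Omega> S x Xsp C i j)"
    unfolding sets_G_alg using False by (auto intro!: sigma_sets.Basic)
  from sets.Diff[OF this] show ?thesis
    by (rule back_subst[where P = "\<lambda>A. A \<in> _"]) auto
qed

lemma mult_Icen_add_mult_Iobs:
  assumes "S i (j - 1) \<omega> < S i j \<omega>"
  shows "a * Icen S C i j \<omega> + a * Iobs S C i j \<omega> = (if S i (j - 1) \<omega> < C i \<omega> then a else 0)"
  using assms unfolding Icen_def Iobs_def by auto

lemma (in sigma_finite_subalgebra) real_cond_exp_mult_Icen_eq_neg_Iobs: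
  assumes incr: "\<And>\<omega>. \<omega> \<in> space M \<Longrightarrow> S i (j - 1) \<omega> < S i j \<omega>"
    and at_risk: "{\<omega> \<in> space M. S i (j - 1) \<omega> < C i \<omega>} \<in> sets F"
    and f: "\<And>\<omega>. \<omega> \<in> space M \<Longrightarrow> f \<omega> = c \<omega> * D \<omega>"
    and c: "c \<in> borel_measurable F" and D: "D \<in> borel_measurable M"
    and D0: "AE \<omega> in M. real_cond_exp M F D \<omega> = 0"
    and int: "integrable M (\<lambda>\<omega>. f \<omega> * Icen S C i j \<omega>)" "integrable M (\<lambda>\<omega>. f \<omega> * Iobs S C i j \<omega>)"
  shows "AE \<omega> in M. real_cond_exp M F (\<lambda>\<omega>. f \<omega> * Icen S C i j \<omega>) \<omega>
                  = - real_cond_exp M F (\<lambda>\<omega>. f \<omega> * Iobs S C i j \<omega>) \<omega>"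
proof -
  let ?h = "\<lambda>\<omega>. if S i (j - 1) \<omega> < C i \<omega> then 1 else 0 :: real"
  have "?h \<in> borel_measurable F"
    using at_risk subalg by (intro measurable_If) (auto simp: subalgebra_def)
  with c have ch: "(\<lambda>\<omega>. c \<omega> * ?h \<omega>) \<in> borel_measurable F" by (rule borel_measurable_times)
  show ?thesis
  proof (rule real_cond_exp_eq_neg_if_sum_factors[OF int ch D _ D0])
    fix \<omega> assume \<omega>: "\<omega> \<in> space M"
    show "f \<omega> * Icen S C i j \<omega> + f \<omega> * Iobs S C i j \<omega> = c \<omega> * ?h \<omega> * D \<omega>"
      unfolding mult_Icen_add_mult_Iobs[of S i j \<omega>, OF incr[OF \<omega>]] f[OF \<omega>] by simp
  qed
qed

theorem lemma2p1:
  fixes \<Omega> :: "'a measure"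
    and P :: "((real ^ 'p::finite) \<times> real) \<Rightarrow> 'a measure"
    and K :: "((real ^ 'p) \<times> real) set"
    and S :: "nat \<Rightarrow> nat \<Rightarrow> 'a \<Rightarrow> real"
    and C :: "nat \<Rightarrow> 'a \<Rightarrow> real"
    and x :: "nat \<Rightarrow> nat \<Rightarrow> 'a \<Rightarrow> 'c"
    and Xsp :: "'c measure"
    and \<mu> V :: "nat \<Rightarrow> nat \<Rightarrow> real ^ 'p \<Rightarrow> 'a \<Rightarrow> real"
    and \<eta> :: "(real ^ 'p) \<times> real"
    and g :: "'a \<Rightarrow> real"
    and i j :: nat
  assumes prob: "\<And>\<eta>'. \<eta>' \<in> K \<Longrightarrow> prob_space (P \<eta>')"
    and sets_P: "\<And>\<eta>'. \<eta>' \<in> K \<Longrightarrow> sets (P \<eta>') = sets \<Omega>"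
    and S_meas: "\<And>i l. S i l \<in> borel_measurable \<Omega>"
    and x_meas: "\<And>i l. x i l \<in> measurable \<Omega> Xsp"
    and C_meas: "\<And>i. C i \<in> borel_measurable \<Omega>"
    and S0: "\<And>i \<omega>. \<omega> \<in> space \<Omega> \<Longrightarrow> S i 0 \<omega> = 0"
    and S_incr: "\<And>i l \<omega>. \<omega> \<in> space \<Omega> \<Longrightarrow> S i l \<omega> < S i (Suc l) \<omega>"
    and C_pos: "\<And>i \<omega>. \<omega> \<in> space \<Omega> \<Longrightarrow> 0 < C i \<omega>"
    and Y_sq: "\<And>\<eta>' i j. \<eta>' \<in> K \<Longrightarrow> 1 \<le> i \<Longrightarrow> 1 \<le> j \<Longrightarrow>
                 integrable (P \<eta>') (\<lambda>\<omega>. (gap S i j \<omega>)\<^sup>2)"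
    and \<mu>_meas: "\<And>\<eta>' i j. \<eta>' \<in> K \<Longrightarrow> 1 \<le> i \<Longrightarrow> 1 \<le> j \<Longrightarrow>
                 \<mu> i j (fst \<eta>') \<in> borel_measurable (F_alg \<Omega> S x Xsp i (j - 1))"
    and V_meas: "\<And>\<eta>' i j. \<eta>' \<in> K \<Longrightarrow> 1 \<le> i \<Longrightarrow> 1 \<le> j \<Longrightarrow>
                 V i j (fst \<eta>') \<in> borel_measurable (F_alg \<Omega> S x Xsp i (j - 1))"
    and V_pos: "\<And>\<eta>' i j \<omega>. \<eta>' \<in> K \<Longrightarrow> 1 \<le> i \<Longrightarrow> 1 \<le> j \<Longrightarrow> \<omega> \<in> space \<Omega> \<Longrightarrow>
                 0 < V i j (fst \<eta>') \<omega>"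
    and mean_F: "\<And>\<eta>' i j. \<eta>' \<in> K \<Longrightarrow> 1 \<le> i \<Longrightarrow> 1 \<le> j \<Longrightarrow>
                 AE \<omega> in P \<eta>'. real_cond_exp (P \<eta>') (F_alg \<Omega> S x Xsp i (j - 1)) (gap S i j) \<omega>
                                 = \<mu> i j (fst \<eta>') \<omega>"
    and var_F: "\<And>\<eta>' i j. \<eta>' \<in> K \<Longrightarrow> 1 \<le> i \<Longrightarrow> 1 \<le> j \<Longrightarrow>
                 AE \<omega> in P \<eta>'. real_cond_exp (P \<eta>') (F_alg \<Omega> S x Xsp i (j - 1))
                     (\<lambda>\<omega>. (gap S i j \<omega> - \<mu> i j (fst \<eta>') \<omega>)\<^sup>2) \<omega>
                   = snd \<eta>' * (V i j (fst \<eta>') \<omega>)\<^sup>2"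
    and mean_G: "\<And>\<eta>' i j. \<eta>' \<in> K \<Longrightarrow> 1 \<le> i \<Longrightarrow> 1 \<le> j \<Longrightarrow>
                 AE \<omega> in P \<eta>'. real_cond_exp (P \<eta>') (G_alg \<Omega> S x Xsp C i (j - 1)) (gap S i j) \<omega>
                                 = real_cond_exp (P \<eta>') (F_alg \<Omega> S x Xsp i (j - 1)) (gap S i j) \<omega>"
    and var_G: "\<And>\<eta>' i j. \<eta>' \<in> K \<Longrightarrow> 1 \<le> i \<Longrightarrow> 1 \<le> j \<Longrightarrow>
                 AE \<omega> in P \<eta>'.
                   real_cond_exp (P \<eta>') (G_alg \<Omega> S x Xsp C i (j - 1))
                     (\<lambda>\<omega>. (gap S i j \<omega>
                        - real_cond_exp (P \<eta>') (G_alg \<Omega> S x Xsp C i (j - 1)) (gap S i j) \<omega>)\<^sup>2) \<omega>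
                 = real_cond_exp (P \<eta>') (F_alg \<Omega> S x Xsp i (j - 1))
                     (\<lambda>\<omega>. (gap S i j \<omega>
                        - real_cond_exp (P \<eta>') (F_alg \<Omega> S x Xsp i (j - 1)) (gap S i j) \<omega>)\<^sup>2) \<omega>"
    and \<eta>K: "\<eta> \<in> K"
    and ij: "1 \<le> i" "1 \<le> j"
    and g_meas: "g \<in> borel_measurable (G_alg \<Omega> S x Xsp C i (j - 1))"
    and int1: "integrable (P \<eta>) (\<lambda>\<omega>. g \<omega> * Zres S \<mu> V i j (fst \<eta>) \<omega> * Icen S C i j \<omega>)"
    and int2: "integrable (P \<eta>) (\<lambda>\<omega>. g \<omega> * Zres S \<mu> V i j (fst \<eta>) \<omega> * Iobs S C i j \<omega>)"
    and int3: "integrable (P \<eta>)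
                 (\<lambda>\<omega>. g \<omega> * ((Zres S \<mu> V i j (fst \<eta>) \<omega>)\<^sup>2 - snd \<eta>) * Icen S C i j \<omega>)"
    and int4: "integrable (P \<eta>)
                 (\<lambda>\<omega>. g \<omega> * ((Zres S \<mu> V i j (fst \<eta>) \<omega>)\<^sup>2 - snd \<eta>) * Iobs S C i j \<omega>)"
  shows "(AE \<omega> in P \<eta>.
            real_cond_exp (P \<eta>) (G_alg \<Omega> S x Xsp C i (j - 1))
              (\<lambda>\<omega>. g \<omega> * Zres S \<mu> V i j (fst \<eta>) \<omega> * Icen S C i j \<omega>) \<omega>
          = - real_cond_exp (P \<eta>) (G_alg \<Omega> S x Xsp C i (j - 1))
              (\<lambda>\<omega>. g \<omega> * Zres S \<mu> V i j (fst \<eta>) \<omega> * Iobs S C i j \<omega>) \<omega>)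
       \<and> (AE \<omega> in P \<eta>.
            real_cond_exp (P \<eta>) (G_alg \<Omega> S x Xsp C i (j - 1))
              (\<lambda>\<omega>. g \<omega> * ((Zres S \<mu> V i j (fst \<eta>) \<omega>)\<^sup>2 - snd \<eta>) * Icen S C i j \<omega>) \<omega>
          = - real_cond_exp (P \<eta>) (G_alg \<Omega> S x Xsp C i (j - 1))
              (\<lambda>\<omega>. g \<omega> * ((Zres S \<mu> V i j (fst \<eta>) \<omega>)\<^sup>2 - snd \<eta>) * Iobs S C i j \<omega>) \<omega>)"
proof -
  let ?M = "P \<eta>" and ?F = "F_alg \<Omega> S x Xsp i (j - 1)" and ?G = "G_alg \<Omega> S x Xsp C i (j - 1)"
  let ?Y = "gap S i j" and ?m = "\<mu> i j (fst \<eta>)" and ?v = "V i j (fst \<eta>)"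
  interpret prob_space ?M using prob[OF \<eta>K] .
  have sets_M: "sets ?M = sets \<Omega>" using sets_P[OF \<eta>K] .
  have space_M: "space ?M = space \<Omega>" using sets_eq_imp_space_eq[OF sets_M] .
  have MG: "subalgebra ?M ?G" using subalgebra_G_alg[OF sets_M S_meas x_meas C_meas] .
  have GF: "subalgebra ?G ?F" by (rule subalgebra_G_alg_F_alg)
  interpret G: finite_measure_subalgebra ?M ?G
    by (rule finite_measure_subalgebraI[OF _ MG]) unfold_locales
  note F_meas = \<mu>_meas[OF \<eta>K ij] V_meas[OF \<eta>K ij]
  have m_G [measurable]: "?m \<in> borel_measurable ?G" and v_G [measurable]: "?v \<in> borel_measurable ?G"
    using measurable_from_subalg[OF GF F_meas(1)] measurable_from_subalg[OF GF F_meas(2)] .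
  have Y_M [measurable]: "?Y \<in> borel_measurable ?M"
    unfolding measurable_cong_sets[OF sets_M refl] gap_def using S_meas by simp
  have [measurable]: "g \<in> borel_measurable ?G" "?m \<in> borel_measurable ?M" "?v \<in> borel_measurable ?M"
    using g_meas measurable_from_subalg[OF MG m_G] measurable_from_subalg[OF MG v_G] by simp_all
  have centred: "AE \<omega> in ?M. real_cond_exp ?M ?G (\<lambda>\<omega>. ?Y \<omega> - ?m \<omega>) \<omega> = 0"
    "AE \<omega> in ?M. real_cond_exp ?M ?G (\<lambda>\<omega>. (?Y \<omega> - ?m \<omega>)\<^sup>2 - snd \<eta> * (?v \<omega>)\<^sup>2) \<omega> = 0"
    using F_meas by (intro centred_moments_real_cond_exp[OF finite_measure_axioms MG GF Y_M
          Y_sq[OF \<eta>K ij] _ _ mean_F[OF \<eta>K ij] mean_G[OF \<eta>K ij] var_F[OF \<eta>K ij]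
          var_G[OF \<eta>K ij]]; measurable)+
  have incr: "S i (j - 1) \<omega> < S i j \<omega>" and v_pos: "0 < ?v \<omega>" if "\<omega> \<in> space ?M" for \<omega>
    using S_incr[of \<omega> i "j - 1"] V_pos[OF \<eta>K ij, of \<omega>] that ij space_M by simp_all
  have at_risk: "{\<omega> \<in> space ?M. S i (j - 1) \<omega> < C i \<omega>} \<in> sets ?G"
    unfolding space_M using S0 C_pos by (intro at_risk_set_in_G_alg) simp
  have c_G: "(\<lambda>\<omega>. g \<omega> / ?v \<omega>) \<in> borel_measurable ?G"
      "(\<lambda>\<omega>. g \<omega> / (?v \<omega>)\<^sup>2) \<in> borel_measurable ?G"
    and D_M: "(\<lambda>\<omega>. ?Y \<omega> - ?m \<omega>) \<in> borel_measurable ?M"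
      "(\<lambda>\<omega>. (?Y \<omega> - ?m \<omega>)\<^sup>2 - snd \<eta> * (?v \<omega>)\<^sup>2) \<in> borel_measurable ?M"
    by measurable
  have Z_factor: "g \<omega> * Zres S \<mu> V i j (fst \<eta>) \<omega> = g \<omega> / ?v \<omega> * (?Y \<omega> - ?m \<omega>)" for \<omega>
    unfolding Zres_def by simp
  have Z2_factor: "g \<omega> * ((Zres S \<mu> V i j (fst \<eta>) \<omega>)\<^sup>2 - snd \<eta>)
      = g \<omega> / (?v \<omega>)\<^sup>2 * ((?Y \<omega> - ?m \<omega>)\<^sup>2 - snd \<eta> * (?v \<omega>)\<^sup>2)" if "\<omega> \<in> space ?M" for \<omega>
    unfolding Zres_def using v_pos[OF that] by (simp add: field_simps)
  show ?thesis
    using G.real_cond_exp_mult_Icen_eq_neg_Iobs[OF incr at_risk Z_factor c_G(1) D_M(1) centred(1)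
        int1 int2]
      G.real_cond_exp_mult_Icen_eq_neg_Iobs[OF incr at_risk Z2_factor c_G(2) D_M(2) centred(2)
        int3 int4]
    by simp
qed

end
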